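(* Let $G=(V,E)$ be a finite simple graph and $v\in V$. Let $G/v$ denote the graph obtained from $G$ by deleting $v$ (and its incident edges) and making the open neighbourhood $N_G(v)$ a clique (adding an edge between any two non-adjacent vertices of $N_G(v)$; already adjacent pairs remain simply adjacent). Then $$\gamma_{coe}(G)-\deg(v)-1\leq \gamma_{coe}(G/v)\leq \gamma_{coe}(G)+\deg(v)-1.$$
   Context: All graphs are finite and simple. For a graph $G=(V,E)$ and $v\in V$, $N_G(v)=\{u\in V: uv\in E\}$ and $\deg(v)=|N_G(v)|$. A set $D\subseteq V$ is a dominating set if every vertex of $V\setminus D$ is adjacent to at least one vertex of $D$. A dominating set $D$ is a co-even dominating set if $\deg(v)$ is even for every $v\in V\setminus D$ (degrees taken in the graph under consideration). The co-even domination number $\gamma_{coe}(G)$ is the minimum cardinality of a co-even dominating set of $G$. *)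

theory Defs
  imports Main
begin

definition simple_graph :: "'a set \<Rightarrow> ('a \<times> 'a) set \<Rightarrow> bool" where
  "simple_graph V E \<longleftrightarrow> finite V \<and> E \<subseteq> V \<times> V \<and>
     (\<forall>x. (x, x) \<notin> E) \<and> (\<forall>x y. (x, y) \<in> E \<longrightarrow> (y, x) \<in> E)"

definition nbhd :: "('a \<times> 'a) set \<Rightarrow> 'a \<Rightarrow> 'a set" where
  "nbhd E v = {u. (v, u) \<in> E}"

definition deg :: "('a \<times> 'a) set \<Rightarrow> 'a \<Rightarrow> nat" where
  "deg E v = card (nbhd E v)"

definition dominating_set :: "'a set \<Rightarrow> ('a \<times> 'a) set \<Rightarrow> 'a set \<Rightarrow> bool" where
  "dominating_set V E D \<longleftrightarrow> D \<subseteq> V \<and> (\<forall>v \<in> V - D. \<exists>u \<in> D. (v, u) \<in> E)"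

definition coeven_dominating_set :: "'a set \<Rightarrow> ('a \<times> 'a) set \<Rightarrow> 'a set \<Rightarrow> bool" where
  "coeven_dominating_set V E D \<longleftrightarrow> dominating_set V E D \<and> (\<forall>v \<in> V - D. even (deg E v))"

text \<open>Minimum cardinality of a co-even dominating set (V itself always is one).\<close>
definition gamma_coe :: "'a set \<Rightarrow> ('a \<times> 'a) set \<Rightarrow> nat" where
  "gamma_coe V E = Min {card D | D. coeven_dominating_set V E D}"

text \<open>G/v: delete v and make N_G(v) a clique. Vertex set is V - {v}.\<close>
definition contract_edges :: "'a set \<Rightarrow> ('a \<times> 'a) set \<Rightarrow> 'a \<Rightarrow> ('a \<times> 'a) set" where
  "contract_edges V E v = {(x, y). x \<in> V - {v} \<and> y \<in> V - {v} \<and> x \<noteq> y \<and>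
      ((x, y) \<in> E \<or> (x \<in> nbhd E v \<and> y \<in> nbhd E v))}"

end

theory Submission
  imports Defs
begin

text \<open>Vertices outside the closed neighbourhood \<open>N[v]\<close> have the same neighbourhood in \<open>G\<close>
  and in \<open>G/v\<close>. Hence from a co-even dominating set \<open>D'\<close> of \<open>G/v\<close> one obtains the
  co-even dominating set \<open>D' \<union> N(v) \<union> {v}\<close> of \<open>G\<close>, and from a co-even dominating set \<open>D\<close>
  of \<open>G\<close> the co-even dominating set \<open>(D - {v}) \<union> N(v)\<close> of \<open>G/v\<close>. In the second case one
  vertex is saved: \<open>D\<close> dominates \<open>v\<close>, so either \<open>v \<in> D\<close> or \<open>D\<close> meets \<open>N(v)\<close>.\<close>

lemma finite_coeven_dominating_cards:
  assumes "finite V"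
  shows "finite {card D | D. coeven_dominating_set V E D}"
proof -
  have "{card D | D. coeven_dominating_set V E D} \<subseteq> card ` Pow V"
    by (auto simp: coeven_dominating_set_def dominating_set_def)
  then show ?thesis
    using assms finite_subset by blast
qed

lemma finite_coeven_dominating_set:
  assumes "finite V" and "coeven_dominating_set V E D"
  shows "finite D"
  using assms by (auto simp: coeven_dominating_set_def dominating_set_def intro: finite_subset)

lemma gamma_coe_le_card:
  assumes "finite V" and "coeven_dominating_set V E D"
  shows "gamma_coe V E \<le> card D"
  unfolding gamma_coe_def
  using Min_le[OF finite_coeven_dominating_cards[OF assms(1)]] assms(2) by blast

lemma gamma_coe_attained:
  assumes "finite V"
  obtains D where "coeven_dominating_set V E D" and "card D = gamma_coe V E"
proof -
  have "coeven_dominating_set V E V"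
    by (auto simp: coeven_dominating_set_def dominating_set_def)
  then have "{card D | D. coeven_dominating_set V E D} \<noteq> {}"
    by blast
  from Min_in[OF finite_coeven_dominating_cards[OF assms] this] that show ?thesis
    unfolding gamma_coe_def by force
qed

lemma nbhd_contract_edges_outside:
  assumes "simple_graph V E" and "x \<in> V" "x \<noteq> v" "x \<notin> nbhd E v"
  shows "nbhd (contract_edges V E v) x = nbhd E x"
proof -
  have "(x, v) \<notin> E"
    using assms by (auto simp: simple_graph_def nbhd_def)
  with assms show ?thesis
    by (auto simp: simple_graph_def contract_edges_def nbhd_def)
qed

lemma deg_contract_edges_outside:
  assumes "simple_graph V E" and "x \<in> V" "x \<noteq> v" "x \<notin> nbhd E v"
  shows "deg (contract_edges V E v) x = deg E x"
  using nbhd_contract_edges_outside[OF assms] by (simp add: deg_def)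

lemma coeven_dominating_set_uncontract:
  assumes G: "simple_graph V E" and "v \<in> V"
    and D': "coeven_dominating_set (V - {v}) (contract_edges V E v) D'"
  shows "coeven_dominating_set V E (D' \<union> nbhd E v \<union> {v})"
  unfolding coeven_dominating_set_def dominating_set_def
proof (intro conjI ballI)
  show "D' \<union> nbhd E v \<union> {v} \<subseteq> V"
    using G D' \<open>v \<in> V\<close>
    by (auto simp: simple_graph_def nbhd_def coeven_dominating_set_def dominating_set_def)
next
  fix x assume x: "x \<in> V - (D' \<union> nbhd E v \<union> {v})"
  then obtain u where "u \<in> D'" "(x, u) \<in> contract_edges V E v"
    using D' unfolding coeven_dominating_set_def dominating_set_def by blast
  with x show "\<exists>u \<in> D' \<union> nbhd E v \<union> {v}. (x, u) \<in> E"
    by (auto simp: contract_edges_def)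
next
  fix x assume x: "x \<in> V - (D' \<union> nbhd E v \<union> {v})"
  then have "even (deg (contract_edges V E v) x)"
    using D' by (auto simp: coeven_dominating_set_def)
  with x show "even (deg E x)"
    using deg_contract_edges_outside[OF G] by auto
qed

lemma coeven_dominating_set_contract:
  assumes G: "simple_graph V E"
    and D: "coeven_dominating_set V E D"
  shows "coeven_dominating_set (V - {v}) (contract_edges V E v) (D - {v} \<union> nbhd E v)"
  unfolding coeven_dominating_set_def dominating_set_def
proof (intro conjI ballI)
  show "D - {v} \<union> nbhd E v \<subseteq> V - {v}"
    using G D by (auto simp: simple_graph_def nbhd_def coeven_dominating_set_def dominating_set_def)
next
  fix x assume x: "x \<in> V - {v} - (D - {v} \<union> nbhd E v)"
  then obtain u where u: "u \<in> D" "(x, u) \<in> E"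
    using D unfolding coeven_dominating_set_def dominating_set_def by blast
  have "u \<noteq> v"
    using G u x by (auto simp: simple_graph_def nbhd_def)
  with G u x show "\<exists>u \<in> D - {v} \<union> nbhd E v. (x, u) \<in> contract_edges V E v"
    by (auto simp: simple_graph_def contract_edges_def)
next
  fix x assume x: "x \<in> V - {v} - (D - {v} \<union> nbhd E v)"
  then have "even (deg E x)"
    using D by (auto simp: coeven_dominating_set_def)
  with x show "even (deg (contract_edges V E v) x)"
    using deg_contract_edges_outside[OF G] by auto
qed

lemma card_Diff_singleton_Un_le:
  assumes "finite D" "finite N" and "v \<in> D \<or> D \<inter> N \<noteq> {}"
  shows "card (D - {v} \<union> N) + 1 \<le> card D + card N"
  using assms(3)
proof
  assume "v \<in> D"
  then have "card (D - {v}) + 1 = card D"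
    using card_Suc_Diff1[OF assms(1)] by simp
  then show ?thesis
    using card_Un_le[of "D - {v}" N] by simp
next
  assume "D \<inter> N \<noteq> {}"
  then have "card (D \<inter> N) \<ge> 1"
    using assms(1) by (simp add: Suc_le_eq card_gt_0_iff)
  moreover have "card (D \<union> N) + card (D \<inter> N) = card D + card N"
    using card_Un_Int[OF assms(1,2)] by simp
  moreover have "card (D - {v} \<union> N) \<le> card (D \<union> N)"
    using assms(1,2) by (intro card_mono) auto
  ultimately show ?thesis
    by linarith
qed

lemma gamma_coe_le_gamma_coe_contract:
  assumes G: "simple_graph V E" and "v \<in> V"
  shows "gamma_coe V E \<le> gamma_coe (V - {v}) (contract_edges V E v) + deg E v + 1"
proof -
  have "finite V" "finite (nbhd E v)"
    using G by (auto simp: simple_graph_def nbhd_def intro: finite_subset)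
  obtain D' where D': "coeven_dominating_set (V - {v}) (contract_edges V E v) D'"
    and card_D': "card D' = gamma_coe (V - {v}) (contract_edges V E v)"
    using gamma_coe_attained[of "V - {v}"] \<open>finite V\<close> by blast
  have "finite D'"
    using finite_coeven_dominating_set D' \<open>finite V\<close> by blast
  have "gamma_coe V E \<le> card (D' \<union> nbhd E v \<union> {v})"
    using gamma_coe_le_card[OF \<open>finite V\<close> coeven_dominating_set_uncontract[OF assms D']] .
  also have "\<dots> \<le> card D' + card (nbhd E v) + 1"
    using card_Un_le[of "D' \<union> nbhd E v" "{v}"] card_Un_le[of D' "nbhd E v"] by simp
  finally show ?thesis
    using card_D' by (simp add: deg_def)
qed

lemma gamma_coe_contract_le_gamma_coe:
  assumes G: "simple_graph V E" and "v \<in> V"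
  shows "gamma_coe (V - {v}) (contract_edges V E v) + 1 \<le> gamma_coe V E + deg E v"
proof -
  have "finite V" "finite (nbhd E v)"
    using G by (auto simp: simple_graph_def nbhd_def intro: finite_subset)
  obtain D where D: "coeven_dominating_set V E D" and card_D: "card D = gamma_coe V E"
    using gamma_coe_attained \<open>finite V\<close> by blast
  have "finite D"
    using finite_coeven_dominating_set D \<open>finite V\<close> by blast
  have "v \<in> D \<or> D \<inter> nbhd E v \<noteq> {}"
    using D \<open>v \<in> V\<close> by (auto simp: coeven_dominating_set_def dominating_set_def nbhd_def)
  have "gamma_coe (V - {v}) (contract_edges V E v) \<le> card (D - {v} \<union> nbhd E v)"
    using gamma_coe_le_card[OF _ coeven_dominating_set_contract[OF G D]] \<open>finite V\<close> by blast
  also have "\<dots> + 1 \<le> card D + card (nbhd E v)"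
    using card_Diff_singleton_Un_le[OF \<open>finite D\<close> \<open>finite (nbhd E v)\<close>] \<open>v \<in> D \<or> _\<close> .
  finally show ?thesis
    using card_D by (simp add: deg_def)
qed

theorem mainTheorem4:
  fixes V :: "'a set" and E :: "('a \<times> 'a) set" and v :: 'a
  assumes "simple_graph V E" and "v \<in> V"
  shows "int (gamma_coe V E) - int (deg E v) - 1 \<le> int (gamma_coe (V - {v}) (contract_edges V E v))
       \<and> int (gamma_coe (V - {v}) (contract_edges V E v)) \<le> int (gamma_coe V E) + int (deg E v) - 1"
  using gamma_coe_le_gamma_coe_contract[OF assms] gamma_coe_contract_le_gamma_coe[OF assms]
  by linarith

end
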